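(* Let $h:\mathbb R^m\times\mathcal U\to\mathbb R^m$ satisfy: (i) for each $u\in\mathcal U$ the map $\Gamma_u:x\mapsto x+h(x,u)$ is a homeomorphism of $\mathbb R^m$, and its inverse $\Lambda_u$ satisfies, for a constant $K>0$, $|\Lambda_u(x)|\le K(1+|x|)$ and $|\Lambda_u(x)-\Lambda_u(y)|\le K|x-y|$ for all $x,y\in\mathbb R^m$, $u\in\mathcal U$; (ii) there exist $\sigma>0$ and $K_0\ge e$ such that for every $p\ge1$ there is a constant $C(p)$ with $$\int_{\mathcal U}|h(x,u)-h(y,u)|^{2p}\mu(du)\le C(p)\log N|x-y|^{2p}+C(p)\frac{\log N}{N^{2\sigma p}}$$ for every integer $N>K_0$ and all $|x|,|y|\le N$. For $\varepsilon>0$ set $F(x)=(\varepsilon+|x|^2)^{-1}$. Then: (1) $F(x-x'+h(x,u)-h(x',u))\le(1+K^2)F(x-x')$ for all $x,x'\in\mathbb R^m$, $u\in\mathcal U$; (2) there is a constant $c'$ independent of $\varepsilon$ such that for every integer $N>K_0$ and all $|x|,|x'|\le N$, $$\int_{\mathcal U}\Big[F(x-x'+h(x,u)-h(x',u))-F(x-x')-\langle\nabla F(x-x'),h(x,u)-h(x',u)\rangle\Big]\mu(du)\le c'\Big\{\log N\,F(x-x')+\log N\frac{F^2(x-x')}{N^{2\sigma}}+\log N\frac{F^{5/2}(x-x')}{N^{3\sigma}}\Big\}.$$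
   Context: $\mathcal U$ is a metric space with a $\sigma$-finite measure $\mu$; $|\cdot|$ is the Euclidean norm. (In the paper, condition (ii) is part of a larger assumption that also includes local Lipschitz-type bounds on $f$ and $g$; only the $h$-part enters this lemma.) *)

theory Defs
  imports "HOL-Analysis.Analysis" "HOL-Probability.Probability"
begin

definition Fe :: "real \<Rightarrow> 'a::real_normed_vector \<Rightarrow> real" where
  "Fe \<epsilon> x = inverse (\<epsilon> + (norm x)^2)"

definition grad :: "('a::real_inner \<Rightarrow> real) \<Rightarrow> 'a \<Rightarrow> 'a" where
  "grad f z = (THE D. GDERIV f z :> D)"

end

theory Submission
  imports Defs
begin

text \<open>Part (1): the inverse map is \<open>K\<close>-Lipschitz, so \<open>|x - x'| \<le> K |\<Gamma>\<^sub>u x - \<Gamma>\<^sub>u x'|\<close>, and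
  \<open>\<epsilon> + K\<^sup>2 r\<^sup>2 \<le> (1 + K\<^sup>2) (\<epsilon> + r\<^sup>2)\<close>. Part (2): the second-order Taylor remainder of \<open>F\<close> at \<open>z\<close> in
  direction \<open>a\<close> has a closed form; with part (1) and \<open>F |z|\<^sup>2 \<le> 1\<close>, \<open>sqrt F |z| \<le> 1\<close> it is bounded by
  \<open>(1 + K\<^sup>2) (5 F\<^sup>2 |a|\<^sup>2 + 2 F powr (5/2) |a|\<^sup>3)\<close>. Integrating against the moment bound (ii) for
  \<open>p = 1\<close> and \<open>p = 3/2\<close>, the terms \<open>F\<^sup>2 |z|\<^sup>2\<close> and \<open>F powr (5/2) |z|\<^sup>3\<close> are again at most \<open>F\<close>.\<close>

lemma has_gderiv_norm_power2: "GDERIV (\<lambda>w::'a::real_inner. (norm w)^2) z :> 2 *\<^sub>R z"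
proof -
  have "GDERIV (\<lambda>w::'a. w \<bullet> w) z :> 2 *\<^sub>R z"
    unfolding gderiv_def
    by (rule has_derivative_eq_rhs[OF has_derivative_inner[OF has_derivative_ident has_derivative_ident]])
       (auto simp: inner_commute algebra_simps fun_eq_iff)
  then show ?thesis by (simp add: power2_norm_eq_inner)
qed

lemma gderiv_unique: "GDERIV f z :> D \<Longrightarrow> GDERIV f z :> D' \<Longrightarrow> D = D'"
proof -
  assume "GDERIV f z :> D" "GDERIV f z :> D'"
  then have "(\<lambda>h. h \<bullet> D) = (\<lambda>h. h \<bullet> D')"
    unfolding gderiv_def by (rule has_derivative_unique)
  then have "(D - D') \<bullet> D = (D - D') \<bullet> D'" by metis
  then have "(D - D') \<bullet> (D - D') = 0" by (simp add: inner_diff_right)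
  then show ?thesis by simp
qed

lemma grad_eqI: "GDERIV f z :> D \<Longrightarrow> grad f z = D"
  unfolding grad_def by (blast intro: gderiv_unique)

lemma Fe_pos: "e > 0 \<Longrightarrow> Fe e z > 0"
  unfolding Fe_def by (simp add: add_pos_nonneg)

lemma grad_Fe:
  assumes "e > 0"
  shows "grad (Fe e) z = - (2 * Fe e z ^ 2) *\<^sub>R z"
proof (rule grad_eqI)
  have "e + (norm z)^2 \<noteq> 0"
    using assms by (metis add_pos_nonneg less_irrefl zero_le_power2)
  then have "GDERIV (\<lambda>w. inverse (e + (norm w)^2)) z
      :> - (inverse (e + (norm z)^2))\<^sup>2 *\<^sub>R (0 + 2 *\<^sub>R z)"
    by (intro GDERIV_inverse GDERIV_add GDERIV_const has_gderiv_norm_power2)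
  then show "GDERIV (Fe e) z :> - (2 * Fe e z ^ 2) *\<^sub>R z"
    by (simp add: Fe_def[abs_def] mult.commute)
qed

lemma Fe_mult_norm_power2_le: "e > 0 \<Longrightarrow> Fe e z * (norm z)^2 \<le> 1"
  unfolding Fe_def by (simp add: field_simps add_pos_nonneg)

lemma sqrt_Fe_mult_norm_le:
  assumes "e > 0"
  shows "sqrt (Fe e z) * norm z \<le> 1"
proof (rule power2_le_imp_le)
  show "(sqrt (Fe e z) * norm z)^2 \<le> 1^2"
    using Fe_mult_norm_power2_le[OF assms] Fe_pos[OF assms, of z]
    by (simp add: power_mult_distrib)
qed simp

lemma Fe_powr_five_halves: "e > 0 \<Longrightarrow> Fe e z powr (5/2) = Fe e z ^ 2 * sqrt (Fe e z)"
  using Fe_pos[of e z] powr_add[of "Fe e z" 2 "1/2"] by (simp add: powr_half_sqrt)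

lemma Fe_power2_mult_norm_power2_le: "e > 0 \<Longrightarrow> Fe e z ^ 2 * (norm z)^2 \<le> Fe e z"
  using Fe_mult_norm_power2_le[of e z] Fe_pos[of e z]
  by (simp add: power2_eq_square mult.assoc mult_left_le)

lemma Fe_powr_mult_norm_power3_le: "e > 0 \<Longrightarrow> Fe e z powr (5/2) * (norm z)^3 \<le> Fe e z"
proof -
  assume e: "e > 0"
  define F where "F = Fe e z"
  have F: "F > 0" "F * (norm z)^2 \<le> 1" "sqrt F * norm z \<le> 1"
    using Fe_pos[OF e] Fe_mult_norm_power2_le[OF e] sqrt_Fe_mult_norm_le[OF e] by (simp_all add: F_def)
  have "F powr (5/2) * (norm z)^3 = F * ((F * (norm z)^2) * (sqrt F * norm z))"
    using e by (simp add: F_def Fe_powr_five_halves power2_eq_square power3_eq_cube)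
  also have "\<dots> \<le> F * (1 * 1)"
    using F by (intro mult_left_mono mult_mono) auto
  finally show ?thesis by (simp add: F_def)
qed

lemma Fe_le_mult_Fe_if_norm_le:
  fixes z w :: "'a::real_normed_vector"
  assumes "e > 0" and "norm z \<le> K * norm w"
  shows "Fe e w \<le> (1 + K^2) * Fe e z"
proof -
  have "(norm z)^2 \<le> K^2 * (norm w)^2"
    using assms(2) power_mono[OF assms(2)] by (simp add: power_mult_distrib)
  moreover have "0 \<le> K^2 * e" "0 \<le> (norm w)^2"
    using assms(1) by simp_all
  ultimately have le: "e + (norm z)^2 \<le> (1 + K^2) * (e + (norm w)^2)"
    unfolding ring_distribs by linarith
  have "e + (norm z)^2 > 0" "e + (norm w)^2 > 0"
    using assms(1) by (simp_all add: add_pos_nonneg)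
  with le have "1 / (e + (norm w)^2) \<le> (1 + K^2) / (e + (norm z)^2)"
    by (simp add: field_simps)
  then show ?thesis
    by (simp add: Fe_def divide_inverse)
qed

lemma Fe_increment_le_of_lipschitz_inverse:
  fixes g :: "'a::real_normed_vector \<Rightarrow> 'a"
  assumes "e > 0" and inverse: "\<And>y. \<Lambda> (y + g y) = y"
    and lipschitz: "\<And>x y. norm (\<Lambda> x - \<Lambda> y) \<le> K * norm (x - y)"
  shows "Fe e (x - x' + g x - g x') \<le> (1 + K^2) * Fe e (x - x')"
proof (rule Fe_le_mult_Fe_if_norm_le[OF assms(1)])
  have "norm (x - x') = norm (\<Lambda> (x + g x) - \<Lambda> (x' + g x'))"
    by (simp add: inverse)
  also have "\<dots> \<le> K * norm ((x + g x) - (x' + g x'))"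
    by (rule lipschitz)
  finally show "norm (x - x') \<le> K * norm (x - x' + g x - g x')"
    by (simp add: algebra_simps)
qed

lemma inverse_second_order_remainder:
  fixes A B q m :: real
  assumes "A \<noteq> 0" "B \<noteq> 0" and B: "B = A + 2 * q + m^2"
  shows "1/B - 1/A + 2 * q / A^2 = 1/B * ((1/A)^2 * (4 * q^2 + 2 * q * m^2) - (1/A) * m^2)"
proof -
  have "A^2 - A * B + 2 * q * B = 4 * q^2 + 2 * q * m^2 - A * m^2"
    unfolding B by (simp add: algebra_simps power2_eq_square)
  then show ?thesis
    using assms(1,2) by (simp add: field_simps power2_eq_square) (metis distrib_left)
qed

lemma Fe_remainder_eq:
  fixes z a :: "'a::real_inner"
  assumes "e > 0"
  shows "Fe e (z + a) - Fe e z - grad (Fe e) z \<bullet> a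
       = Fe e (z + a) * ((Fe e z)^2 * (4 * (z \<bullet> a)^2 + 2 * (z \<bullet> a) * (norm a)^2)
                         - Fe e z * (norm a)^2)"
proof -
  define A where "A = e + (norm z)^2"
  define B where "B = e + (norm (z + a))^2"
  have "A > 0" "B > 0"
    using assms by (simp_all add: A_def B_def add_pos_nonneg)
  then have "A \<noteq> 0" "B \<noteq> 0"
    by simp_all
  have B: "B = A + 2 * (z \<bullet> a) + (norm a)^2"
    by (simp add: A_def B_def power2_norm_eq_inner inner_add algebra_simps inner_commute)
  have F: "Fe e z = 1/A" "Fe e (z + a) = 1/B"
    by (simp_all add: A_def B_def Fe_def divide_inverse)
  have "Fe e (z + a) - Fe e z - grad (Fe e) z \<bullet> a = 1/B - 1/A + 2 * (z \<bullet> a) / A^2"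
    using assms by (simp add: grad_Fe F power_divide)
  also have "\<dots> = 1/B * ((1/A)^2 * (4 * (z \<bullet> a)^2 + 2 * (z \<bullet> a) * (norm a)^2) - (1/A) * (norm a)^2)"
    using \<open>A \<noteq> 0\<close> \<open>B \<noteq> 0\<close> B by (rule inverse_second_order_remainder)
  finally show ?thesis
    by (simp only: F)
qed

lemma Fe_remainder_bound:
  fixes z a :: "'a::real_inner"
  assumes e: "e > 0" and increment: "Fe e (z + a) \<le> L * Fe e z"
  shows "\<bar>Fe e (z + a) - Fe e z - grad (Fe e) z \<bullet> a\<bar>
     \<le> L * (5 * (Fe e z)^2 * (norm a)^2 + 2 * (Fe e z) powr (5/2) * (norm a)^3)"
proof -
  define F where "F = Fe e z"
  define n where "n = norm z"
  define m where "m = norm a"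
  define q where "q = z \<bullet> a"
  have F: "F > 0" "F * n^2 \<le> 1" "sqrt F * n \<le> 1"
    using Fe_pos[OF e] Fe_mult_norm_power2_le[OF e] sqrt_Fe_mult_norm_le[OF e]
    by (simp_all add: F_def n_def)
  have m: "m \<ge> 0"
    by (simp add: m_def)
  have q: "\<bar>q\<bar> \<le> n * m"
    unfolding q_def n_def m_def by (rule Cauchy_Schwarz_ineq2)
  have "\<bar>F^2 * (4 * q^2 + 2 * q * m^2) - F * m^2\<bar> \<le> F^2 * (4 * n^2 * m^2 + 2 * n * m^3) + F * m^2"
  proof -
    have "q^2 \<le> n^2 * m^2"
      using q by (metis abs_ge_zero power2_abs power_mono power_mult_distrib)
    moreover have "\<bar>q * m^2\<bar> \<le> n * m^3"
      using mult_right_mono[OF q, of "m^2"] by (simp add: abs_mult power2_eq_square power3_eq_cube mult.assoc)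
    moreover have "\<bar>4 * q^2 + 2 * q * m^2\<bar> \<le> 4 * q^2 + 2 * \<bar>q * m^2\<bar>"
      using abs_triangle_ineq[of "4 * q^2" "2 * (q * m^2)"] by (simp add: abs_mult)
    ultimately have "\<bar>4 * q^2 + 2 * q * m^2\<bar> \<le> 4 * n^2 * m^2 + 2 * n * m^3"
      by linarith
    then have "\<bar>F^2 * (4 * q^2 + 2 * q * m^2)\<bar> \<le> F^2 * (4 * n^2 * m^2 + 2 * n * m^3)"
      by (simp add: abs_mult mult_left_mono)
    moreover have "\<bar>F * m^2\<bar> = F * m^2"
      using F(1) by simp
    ultimately show ?thesis
      using abs_triangle_ineq4[of "F^2 * (4 * q^2 + 2 * q * m^2)" "F * m^2"] by linarith
  qed
  also have "\<dots> = 4 * F * m^2 * (F * n^2) + 2 * F * sqrt F * m^3 * (sqrt F * n) + F * m^2"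
    using F(1) by (simp add: power2_eq_square power3_eq_cube algebra_simps)
  also have "\<dots> \<le> 4 * F * m^2 * 1 + 2 * F * sqrt F * m^3 * 1 + F * m^2"
    using F m by (intro add_mono mult_left_mono) auto
  finally have bound: "\<bar>F^2 * (4 * q^2 + 2 * q * m^2) - F * m^2\<bar> \<le> F * (5 * m^2 + 2 * sqrt F * m^3)"
    by (simp add: algebra_simps)
  have "\<bar>Fe e (z + a) - Fe e z - grad (Fe e) z \<bullet> a\<bar>
      = Fe e (z + a) * \<bar>F^2 * (4 * q^2 + 2 * q * m^2) - F * m^2\<bar>"
    using Fe_pos[OF e, of "z + a"] by (simp add: Fe_remainder_eq[OF e] F_def q_def m_def abs_mult)
  also have "\<dots> \<le> L * F * (F * (5 * m^2 + 2 * sqrt F * m^3))"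
    using bound increment Fe_pos[OF e, of "z + a"] F(1)
    by (intro mult_mono) (auto simp: F_def)
  also have "\<dots> = L * (5 * F^2 * m^2 + 2 * F powr (5/2) * m^3)"
    using e by (simp add: F_def Fe_powr_five_halves power2_eq_square algebra_simps)
  finally show ?thesis
    by (simp add: F_def m_def)
qed

lemma integrable_integral_le_of_nn_integral_le:
  fixes f :: "'b \<Rightarrow> real"
  assumes [measurable]: "f \<in> borel_measurable M" and nonneg: "\<And>u. f u \<ge> 0" and "v \<ge> 0"
    and bound: "(\<integral>\<^sup>+ u. ennreal (f u) \<partial>M) \<le> ennreal (c * v)"
  shows "integrable M f" and "integral\<^sup>L M f \<le> \<bar>c\<bar> * v"
proof -
  have nn_bound: "(\<integral>\<^sup>+ u. ennreal (f u) \<partial>M) \<le> ennreal (\<bar>c\<bar> * v)"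
    using bound \<open>v \<ge> 0\<close> by (simp add: order_trans[OF _ ennreal_leI] mult_right_mono)
  then show int: "integrable M f"
    using nonneg by (intro integrableI_nonneg) (auto simp: le_less_trans)
  have "ennreal (integral\<^sup>L M f) = (\<integral>\<^sup>+ u. ennreal (f u) \<partial>M)"
    using nonneg int by (intro nn_integral_eq_integral[symmetric]) auto
  with nn_bound have "ennreal (integral\<^sup>L M f) \<le> ennreal (\<bar>c\<bar> * v)"
    by simp
  then show "integral\<^sup>L M f \<le> \<bar>c\<bar> * v"
    using \<open>v \<ge> 0\<close> by (simp add: ennreal_le_iff)
qed

lemma integral_Fe_remainder_le:
  fixes a :: "'b \<Rightarrow> 'a::{real_inner, second_countable_topology}"
  assumes e: "e > 0" and [measurable]: "a \<in> borel_measurable M"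
    and "L \<ge> 0" "l \<ge> 0" "D2 \<ge> 0" "D3 \<ge> 0"
    and increment: "\<And>u. u \<in> space M \<Longrightarrow> Fe e (z + a u) \<le> L * Fe e z"
    and moment2: "(\<integral>\<^sup>+ u. ennreal ((norm (a u))^2) \<partial>M) \<le> ennreal (C2 * (l * (norm z)^2 + l / D2))"
    and moment3: "(\<integral>\<^sup>+ u. ennreal ((norm (a u))^3) \<partial>M) \<le> ennreal (C3 * (l * (norm z)^3 + l / D3))"
  defines "R \<equiv> \<lambda>u. Fe e (z + a u) - Fe e z - grad (Fe e) z \<bullet> a u"
  shows "integrable M R"
    and "(\<integral>u. R u \<partial>M) \<le> L * (5 * \<bar>C2\<bar> + 2 * \<bar>C3\<bar>)
           * (l * Fe e z + l * (Fe e z)^2 / D2 + l * Fe e z powr (5/2) / D3)"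
proof -
  define F where "F = Fe e z"
  define G where "G = (\<lambda>u. L * (5 * F^2 * (norm (a u))^2 + 2 * F powr (5/2) * (norm (a u))^3))"
  have [measurable]: "R \<in> borel_measurable M"
    unfolding R_def grad_Fe[OF e] Fe_def by measurable
  have R_le_G: "\<bar>R u\<bar> \<le> G u" if "u \<in> space M" for u
    unfolding R_def G_def F_def by (rule Fe_remainder_bound[OF e increment[OF that]])
  have "0 \<le> l * (norm z)^2 + l / D2" "0 \<le> l * (norm z)^3 + l / D3"
    using assms(4-6) by simp_all
  note moments = integrable_integral_le_of_nn_integral_le[OF _ _ this(1) moment2]
    integrable_integral_le_of_nn_integral_le[OF _ _ this(2) moment3]
  have int2: "integrable M (\<lambda>u. (norm (a u))^2)"
    and int3: "integrable M (\<lambda>u. (norm (a u))^3)"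
    using moments by auto
  have "F^2 * (\<integral>u. (norm (a u))^2 \<partial>M) \<le> F^2 * (\<bar>C2\<bar> * (l * (norm z)^2 + l / D2))"
    using moments by (intro mult_left_mono) auto
  also have "\<dots> = \<bar>C2\<bar> * (l * (F^2 * (norm z)^2) + l * F^2 / D2)"
    by (simp add: algebra_simps)
  also have "\<dots> \<le> \<bar>C2\<bar> * (l * F + l * F^2 / D2)"
    using Fe_power2_mult_norm_power2_le[OF e] \<open>l \<ge> 0\<close>
    by (intro mult_left_mono add_right_mono) (auto simp: F_def)
  finally have weighted2: "F^2 * (\<integral>u. (norm (a u))^2 \<partial>M) \<le> \<bar>C2\<bar> * (l * F + l * F^2 / D2)" .
  have "F powr (5/2) * (\<integral>u. (norm (a u))^3 \<partial>M) \<le> F powr (5/2) * (\<bar>C3\<bar> * (l * (norm z)^3 + l / D3))"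
    using moments by (intro mult_left_mono) auto
  also have "\<dots> = \<bar>C3\<bar> * (l * (F powr (5/2) * (norm z)^3) + l * F powr (5/2) / D3)"
    by (simp add: algebra_simps)
  also have "\<dots> \<le> \<bar>C3\<bar> * (l * F + l * F powr (5/2) / D3)"
    using Fe_powr_mult_norm_power3_le[OF e] \<open>l \<ge> 0\<close>
    by (intro mult_left_mono add_right_mono) (auto simp: F_def)
  finally have weighted3: "F powr (5/2) * (\<integral>u. (norm (a u))^3 \<partial>M) \<le> \<bar>C3\<bar> * (l * F + l * F powr (5/2) / D3)" .
  have int_G: "integrable M G"
    unfolding G_def using int2 int3 by auto
  show int_R: "integrable M R"
    by (rule Bochner_Integration.integrable_bound[OF int_G]) (auto intro!: AE_I2 order_trans[OF R_le_G] simp: G_def)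
  have "(\<integral>u. R u \<partial>M) \<le> (\<integral>u. G u \<partial>M)"
    using int_R int_G R_le_G by (intro integral_mono) (auto dest: abs_le_D1)
  also have "\<dots> = L * (5 * (F^2 * (\<integral>u. (norm (a u))^2 \<partial>M)) + 2 * (F powr (5/2) * (\<integral>u. (norm (a u))^3 \<partial>M)))"
    unfolding G_def using int2 int3 by (simp add: algebra_simps)
  also have "\<dots> \<le> L * (5 * (\<bar>C2\<bar> * (l * F + l * F^2 / D2)) + 2 * (\<bar>C3\<bar> * (l * F + l * F powr (5/2) / D3)))"
    using weighted2 weighted3 \<open>L \<ge> 0\<close> by (intro mult_left_mono add_mono) auto
  also have "\<dots> \<le> L * (5 * \<bar>C2\<bar> + 2 * \<bar>C3\<bar>) * (l * F + l * F^2 / D2 + l * F powr (5/2) / D3)"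
  proof -
    define X2 where "X2 = l * F^2 / D2"
    define X3 where "X3 = l * F powr (5/2) / D3"
    have "0 \<le> \<bar>C2\<bar> * X3" "0 \<le> \<bar>C3\<bar> * X2"
      using assms(4-6) by (simp_all add: X2_def X3_def)
    then have "5 * (\<bar>C2\<bar> * (l * F + X2)) + 2 * (\<bar>C3\<bar> * (l * F + X3))
        \<le> (5 * \<bar>C2\<bar> + 2 * \<bar>C3\<bar>) * (l * F + X2 + X3)"
      by (simp add: algebra_simps)
    then show ?thesis
      using \<open>L \<ge> 0\<close> by (simp add: X2_def X3_def mult.assoc mult_left_mono)
  qed
  finally show "(\<integral>u. R u \<partial>M) \<le> L * (5 * \<bar>C2\<bar> + 2 * \<bar>C3\<bar>)
           * (l * Fe e z + l * (Fe e z)^2 / D2 + l * Fe e z powr (5/2) / D3)"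
    by (simp add: F_def)
qed

theorem lemma4p1:
  fixes h :: "real^'m \<Rightarrow> 'u::metric_space \<Rightarrow> real^'m"
    and \<Lambda> :: "'u \<Rightarrow> real^'m \<Rightarrow> real^'m"
    and M :: "'u measure"
    and K \<sigma> K0 :: real
    and C :: "real \<Rightarrow> real"
  assumes sf: "sigma_finite_measure M"
    and meas: "\<And>x. (\<lambda>u. h x u) \<in> borel_measurable M"
    and homeo: "\<And>u. u \<in> space M \<Longrightarrow> homeomorphism UNIV UNIV (\<lambda>x. x + h x u) (\<Lambda> u)"
    and Kpos: "K > 0"
    and Lgrowth: "\<And>u x. u \<in> space M \<Longrightarrow> norm (\<Lambda> u x) \<le> K * (1 + norm x)"
    and Llip: "\<And>u x y. u \<in> space M \<Longrightarrow> norm (\<Lambda> u x - \<Lambda> u y) \<le> K * norm (x - y)"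
    and \<sigma>pos: "\<sigma> > 0"
    and K0: "K0 \<ge> exp 1"
    and hint: "\<And>p N x y. p \<ge> 1 \<Longrightarrow> real N > K0 \<Longrightarrow> norm x \<le> real N \<Longrightarrow> norm y \<le> real N \<Longrightarrow>
        (\<integral>\<^sup>+ u. ennreal (norm (h x u - h y u) powr (2 * p)) \<partial>M)
        \<le> ennreal (C p * ln (real N) * norm (x - y) powr (2 * p)
                   + C p * ln (real N) / real N powr (2 * \<sigma> * p))"
  shows "(\<forall>\<epsilon>>0. \<forall>x x' u. u \<in> space M \<longrightarrow>
            Fe \<epsilon> (x - x' + h x u - h x' u) \<le> (1 + K^2) * Fe \<epsilon> (x - x'))
       \<and> (\<exists>c'. \<forall>\<epsilon>>0. \<forall>N::nat. \<forall>x x'.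
            real N > K0 \<longrightarrow> norm x \<le> real N \<longrightarrow> norm x' \<le> real N \<longrightarrow>
            (let g = (\<lambda>u. Fe \<epsilon> (x - x' + h x u - h x' u) - Fe \<epsilon> (x - x')
                          - grad (Fe \<epsilon>) (x - x') \<bullet> (h x u - h x' u))
             in integrable M g \<and>
                (\<integral>u. g u \<partial>M) \<le> c' * (ln (real N) * Fe \<epsilon> (x - x')
                   + ln (real N) * (Fe \<epsilon> (x - x'))^2 / real N powr (2 * \<sigma>)
                   + ln (real N) * (Fe \<epsilon> (x - x')) powr (5/2) / real N powr (3 * \<sigma>))))"
proof -
  have increment: "Fe e (x - x' + h x u - h x' u) \<le> (1 + K^2) * Fe e (x - x')"
    if "e > 0" "u \<in> space M" for e x x' u
  proof (rule Fe_increment_le_of_lipschitz_inverse[OF that(1) _ Llip[OF that(2)]])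
    show "\<Lambda> u (y + h y u) = y" for y
      using homeo[OF that(2)] by (simp add: homeomorphism_def)
  qed
  show ?thesis
  proof (intro conjI allI impI exI[of _ "(1 + K^2) * (5 * \<bar>C 1\<bar> + 2 * \<bar>C (3/2)\<bar>)"], goal_cases)
    case (1 e x x' u)
    then show ?case by (rule increment)
  next
    case (2 e N x x')
    then have e: "e > 0" and N: "real N > K0" and x: "norm x \<le> real N" and x': "norm x' \<le> real N"
      by auto
    have "1 < real N"
      using K0 N one_less_exp_iff[of 1] by linarith
    then have "ln (real N) \<ge> 0"
      by simp
    have moment: "(\<integral>\<^sup>+ u. ennreal (norm (h x u - h x' u) powr (2 * p)) \<partial>M)
        \<le> ennreal (C p * (ln (real N) * norm (x - x') powr (2 * p) + ln (real N) / real N powr (2 * \<sigma> * p)))"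
      if "p \<ge> 1" for p
      using hint[OF that N x x'] by (simp add: distrib_left mult.assoc)
    have eq: "x - x' + h x u - h x' u = (x - x') + (h x u - h x' u)" for u
      by (simp add: algebra_simps)
    have "(\<lambda>u. h x u - h x' u) \<in> borel_measurable M"
      using meas by measurable
    note remainder = integral_Fe_remainder_le[OF e this _ \<open>ln (real N) \<ge> 0\<close> _ _
        increment[OF e, where x=x and x'=x', unfolded eq] moment[of 1, simplified] moment[of "3/2", simplified]]
    show ?case
      unfolding Let_def eq using remainder by simp
  qed
qed

end
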